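(* Let $(X,d)$ be a separable metric space, $T\colon X\to X$ a Borel measurable map, $(s_n)_{n\ge1}$ a scale sequence, and $\mu,\nu$ Borel probability measures on $X$ (not necessarily $T$-invariant). Assume $\nu$ is decisive. Then $\phi(x,y)=\liminf_{n\to\infty}s_n\,d(T^nx,y)$ satisfies $\phi(x,y)\in\{0,\infty\}$ for $\mu\times\nu$-almost every $(x,y)$.
   Context: A scale sequence is a sequence of positive reals $s_n$ with $s_n\to\infty$. A Borel probability measure $\nu$ on $(X,d)$ is decisive if for every sequence $(x_n)$ in $X$ and every scale sequence $(s_n)$, the function $\omega(x)=\liminf_n s_n d(x_n,x)$ lies in $\{0,\infty\}$ for $\nu$-a.e. $x$. *)

theory Defs
  imports "HOL-Probability.Probability"
begin

definition scale_seq :: "(nat \<Rightarrow> real) \<Rightarrow> bool" where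
  "scale_seq s \<longleftrightarrow> (\<forall>n. 0 < s n) \<and> filterlim s at_top sequentially"

definition decisive :: "'a::metric_space measure \<Rightarrow> bool" where
  "decisive \<nu> \<longleftrightarrow>
     (\<forall>xs :: nat \<Rightarrow> 'a. \<forall>s. scale_seq s \<longrightarrow>
        (AE x in \<nu>. liminf (\<lambda>n. ereal (s n * dist (xs n) x)) \<in> {0, \<infinity>}))"

end

theory Submission
  imports Defs
begin

text \<open>For fixed \<open>x\<close> the orbit \<open>T\<^sup>n x\<close> is just a sequence of points, so decisiveness
  of \<open>\<nu>\<close> gives the dichotomy for \<open>\<nu>\<close>-a.e. \<open>y\<close>; since the liminf is jointly measurable
  (here separability is used), Fubini--Tonelli upgrades this to \<open>\<mu> \<times> \<nu>\<close>-a.e. \<open>(x, y)\<close>.\<close>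

lemma borel_measurable_liminf_scaled_dist:
  fixes f :: "nat \<Rightarrow> 'b \<Rightarrow> 'a::{metric_space, second_countable_topology}"
  assumes f: "\<And>n. f n \<in> borel_measurable M" and N: "sets N = sets borel"
  shows "(\<lambda>z. liminf (\<lambda>n. ereal (s n * dist (f n (fst z)) (snd z))))
           \<in> borel_measurable (M \<Otimes>\<^sub>M N)"
proof -
  have "snd \<in> borel_measurable (M \<Otimes>\<^sub>M N)"
    using measurable_snd measurable_cong_sets[OF refl N] by blast
  moreover have "\<And>n. (\<lambda>z. f n (fst z)) \<in> borel_measurable (M \<Otimes>\<^sub>M N)"
    using f by measurable
  ultimately show ?thesis
    by measurable
qed

lemma decisive_AE_pair_measure:
  fixes f :: "nat \<Rightarrow> 'b \<Rightarrow> 'a::{metric_space, second_countable_topology}"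
  assumes "decisive \<nu>" and "scale_seq s"
    and "pair_sigma_finite \<mu> \<nu>" and \<nu>: "sets \<nu> = sets borel"
    and f: "\<And>n. f n \<in> borel_measurable \<mu>"
  shows "AE z in \<mu> \<Otimes>\<^sub>M \<nu>. liminf (\<lambda>n. ereal (s n * dist (f n (fst z)) (snd z))) \<in> {0, \<infinity>}"
proof -
  interpret pair_sigma_finite \<mu> \<nu> by fact
  let ?\<phi> = "\<lambda>z. liminf (\<lambda>n. ereal (s n * dist (f n (fst z)) (snd z)))"
  have "{z \<in> space (\<mu> \<Otimes>\<^sub>M \<nu>). ?\<phi> z \<in> {0, \<infinity>}} \<in> sets (\<mu> \<Otimes>\<^sub>M \<nu>)"
    using borel_measurable_liminf_scaled_dist[OF f \<nu>] by measurable
  moreover have "AE x in \<mu>. AE y in \<nu>. ?\<phi> (x, y) \<in> {0, \<infinity>}"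
    using assms(1,2) unfolding decisive_def by simp
  ultimately show ?thesis
    by (rule AE_pair_measure)
qed

theorem theorem5p3:
  fixes T :: "'a::{metric_space, second_countable_topology} \<Rightarrow> 'a"
    and s :: "nat \<Rightarrow> real"
    and \<mu> \<nu> :: "'a measure"
  assumes "T \<in> borel_measurable borel"
    and "scale_seq s"
    and "prob_space \<mu>" and "sets \<mu> = sets borel"
    and "prob_space \<nu>" and "sets \<nu> = sets borel"
    and "decisive \<nu>"
  shows "AE z in \<mu> \<Otimes>\<^sub>M \<nu>.
           liminf (\<lambda>n. ereal (s n * dist ((T ^^ n) (fst z)) (snd z))) \<in> {0, \<infinity>}"
proof (rule decisive_AE_pair_measure)
  show "pair_sigma_finite \<mu> \<nu>"
    using assms(3,5) by (simp add: pair_sigma_finite_def prob_space_imp_sigma_finite)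
  show "T ^^ n \<in> borel_measurable \<mu>" for n
    using measurable_compose_n[OF assms(1)] measurable_cong_sets[OF assms(4) refl] by blast
qed (use assms in auto)

end
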